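(* Let $\lambda$ be a (straight or skew) shape with $n$ boxes and let $m\in\mathbb N=\{1,2,3,\dots\}$. Then $$\#T[\lambda,m,+]=\#T[\lambda,m,-]=2^{n-1}f^{\lambda},$$ where $f^\lambda$ is the number of standard Young tableaux of shape $\lambda$ (fillings of $\lambda$ by $1,\dots,n$ increasing along rows and down columns).
   Context: Boxes of a diagram are indexed by (row $i$, column $j$), rows numbered downward and columns rightward; the content of the box $(i,j)$ is $j-i$. A D-Young tableau is a filling of a skew diagram by the $2n$ numbers $\pm1,\dots,\pm n$, each number in exactly one box and each box containing one number, except that a box of content $0$ may contain a pair $\pm i$; writing $c_k$ for the content of the box containing $k$, one requires $c_{-k}=-c_k$ for all $k$. It is standard if entries increase from left to right along rows and from top to bottom down columns (a box containing the pair $\pm i$, $i>0$, counts as $-i$ when compared with entries to its left or above and as $i$ when compared with entries to its right or below). A D-Young tableau with no box of content $0$ is regarded as determined by its boxes of positive content together with their entries and contents (i.e. its positive-content part up to translation by multiples of $(1,1)$); the negative part is then forced. For a shape $\lambda$ with $n$ boxes and $m\in\mathbb N$, $T[\lambda,m,+]$ (resp. $T[\lambda,m,-]$) is the set of standard D-Young tableaux whose smallest nonnegative content equals $m$, whose boxes of positive content form the shape $\lambda$, and in which the number of negative entries among the boxes of positive content is even (resp. odd). *)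

theory Defs
  imports Main
begin

type_synonym box = "int \<times> int"

text \<open>Box (i,j): row i (downward), column j (rightward); content j - i.\<close>
definition content :: "box \<Rightarrow> int" where
  "content b = snd b - fst b"

text \<open>Skew diagrams (straight or skew shapes lambda/mu, up to position) are exactly the
finite subsets of the integer grid that are convex for the product order.\<close>
definition skew_diagram :: "box set \<Rightarrow> bool" where
  "skew_diagram S \<longleftrightarrow> finite S \<and>
     (\<forall>i j i' j' a b. (i,j) \<in> S \<longrightarrow> (i',j') \<in> S \<longrightarrow> i \<le> a \<longrightarrow> a \<le> i'
        \<longrightarrow> j \<le> b \<longrightarrow> b \<le> j' \<longrightarrow> (a,b) \<in> S)"

definition shift :: "int \<times> int \<Rightarrow> box set \<Rightarrow> box set" where
  "shift t S = (\<lambda>(i,j). (i + fst t, j + snd t)) ` S"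

definition entries :: "nat \<Rightarrow> int set" where
  "entries n = {k. k \<noteq> 0 \<and> \<bar>k\<bar> \<le> int n}"

text \<open>A D-Young tableau with entries \<open>\<plusminus>1..\<plusminus>n\<close> is encoded by the map sending each entry
to the box containing it (normalised to (0,0) outside the entries).\<close>
definition D_young_tableau :: "nat \<Rightarrow> (int \<Rightarrow> box) \<Rightarrow> bool" where
  "D_young_tableau n pos \<longleftrightarrow>
     skew_diagram (pos ` entries n) \<and>
     (\<forall>k\<in>entries n. content (pos (-k)) = - content (pos k)) \<and>
     (\<forall>a\<in>entries n. \<forall>b\<in>entries n. a \<noteq> b \<longrightarrow> pos a = pos b \<longrightarrow>
          b = -a \<and> content (pos a) = 0) \<and>
     (\<forall>k. k \<notin> entries n \<longrightarrow> pos k = (0,0))"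

text \<open>For a box holding a pair
\<open>\<plusminus>i\<close>, requiring all its entries to be smaller than everything to its right/below and larger
than everything to its left/above is exactly the convention of counting it as i resp. -i.\<close>
definition D_standard :: "nat \<Rightarrow> (int \<Rightarrow> box) \<Rightarrow> bool" where
  "D_standard n pos \<longleftrightarrow>
     (\<forall>a\<in>entries n. \<forall>b\<in>entries n.
        (fst (pos a) = fst (pos b) \<and> snd (pos a) < snd (pos b) \<longrightarrow> a < b) \<and>
        (snd (pos a) = snd (pos b) \<and> fst (pos a) < fst (pos b) \<longrightarrow> a < b))"

definition pos_boxes :: "nat \<Rightarrow> (int \<Rightarrow> box) \<Rightarrow> box set" where
  "pos_boxes n pos = {pos k | k. k \<in> entries n \<and> content (pos k) > 0}"

definition min_nonneg_content :: "nat \<Rightarrow> (int \<Rightarrow> box) \<Rightarrow> int" where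
  "min_nonneg_content n pos = Min {content (pos k) | k. k \<in> entries n \<and> content (pos k) \<ge> 0}"

definition num_neg_in_pos :: "nat \<Rightarrow> (int \<Rightarrow> box) \<Rightarrow> nat" where
  "num_neg_in_pos n pos = card {k \<in> entries n. k < 0 \<and> content (pos k) > 0}"

definition has_zero_box :: "nat \<Rightarrow> (int \<Rightarrow> box) \<Rightarrow> bool" where
  "has_zero_box n pos \<longleftrightarrow> (\<exists>k\<in>entries n. content (pos k) = 0)"

definition same_D_tableau :: "nat \<Rightarrow> (int \<Rightarrow> box) \<Rightarrow> (int \<Rightarrow> box) \<Rightarrow> bool" where
  "same_D_tableau n p q \<longleftrightarrow> p = q \<or>
     (\<not> has_zero_box n p \<and> \<not> has_zero_box n q \<and>
      (\<exists>t::int. \<forall>k\<in>entries n. (content (p k) > 0 \<longleftrightarrow> content (q k) > 0) \<and>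
          (content (p k) > 0 \<longrightarrow> q k = (fst (p k) + t, snd (p k) + t))))"

definition T_raw :: "box set \<Rightarrow> nat \<Rightarrow> bool \<Rightarrow> (int \<Rightarrow> box) set" where
  "T_raw lam m ev = {pos. D_young_tableau (card lam) pos \<and> D_standard (card lam) pos \<and>
      min_nonneg_content (card lam) pos = int m \<and>
      (\<exists>t. pos_boxes (card lam) pos = shift t lam) \<and>
      (even (num_neg_in_pos (card lam) pos) \<longleftrightarrow> ev)}"

text \<open>\<open>T_D lam m True\<close> is T[lam,m,+], \<open>T_D lam m False\<close> is T[lam,m,-].\<close>
definition T_D :: "box set \<Rightarrow> nat \<Rightarrow> bool \<Rightarrow> (int \<Rightarrow> box) set set" where
  "T_D lam m ev = T_raw lam m ev //
     {(p,q). p \<in> T_raw lam m ev \<and> q \<in> T_raw lam m ev \<and> same_D_tableau (card lam) p q}"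

definition SYT :: "box set \<Rightarrow> (box \<Rightarrow> nat) set" where
  "SYT lam = {g. (\<forall>x. x \<notin> lam \<longrightarrow> g x = 0) \<and> bij_betw g lam {1..card lam} \<and>
     (\<forall>x\<in>lam. \<forall>y\<in>lam.
        (fst x = fst y \<and> snd x < snd y \<longrightarrow> g x < g y) \<and>
        (snd x = snd y \<and> fst x < fst y \<longrightarrow> g x < g y))}"

definition f_shape :: "box set \<Rightarrow> nat" where
  "f_shape lam = card (SYT lam)"

end

theory Submission
  imports Defs "HOL-Library.Product_Plus"
begin

text \<open>Since \<open>m \<ge> 1\<close>, no box has content 0, so a tableau is determined, up to translation
  along the diagonal, by its positive half: a standard filling of a translate of lam by a set V of
  entries containing exactly one of \<open>\<plusminus>j\<close> for each j. Conversely every such filling extends to a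
  tableau: the negated entries go into the point reflection of the positive half through a diagonal
  point chosen so that the two halves share no row or column, whence convexity and standardness
  are inherited. Only the relative order of the entries matters, so each V admits \<open>f\<^sup>\<lambda>\<close>
  fillings, and exactly half of the \<open>2\<^sup>n\<close> choices of V have an even number of negative
  entries.\<close>

section \<open>Standard fillings\<close>

definition box_precedes :: "box \<Rightarrow> box \<Rightarrow> bool" where
  "box_precedes x y \<longleftrightarrow> (fst x = fst y \<and> snd x < snd y) \<or> (snd x = snd y \<and> fst x < fst y)"

lemma box_precedes_translate [simp]: "box_precedes (x + t) (y + t) \<longleftrightarrow> box_precedes x y"
  by (auto simp: box_precedes_def)

lemma box_precedes_reflect [simp]: "box_precedes (c - x) (c - y) \<longleftrightarrow> box_precedes y x"
  by (auto simp: box_precedes_def)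

lemma content_add [simp]: "content (x + y) = content x + content y"
  by (simp add: content_def)

lemma content_diff [simp]: "content (x - y) = content x - content y"
  by (simp add: content_def)

lemma content_diagonal [simp]: "content (s, s) = 0"
  by (simp add: content_def)

definition standard_fillings :: "box set \<Rightarrow> 'a::{linorder,zero} set \<Rightarrow> (box \<Rightarrow> 'a) set" where
  "standard_fillings lam V = {g. (\<forall>x. x \<notin> lam \<longrightarrow> g x = 0) \<and> bij_betw g lam V \<and>
     (\<forall>x\<in>lam. \<forall>y\<in>lam. box_precedes x y \<longrightarrow> g x < g y)}"

lemma standard_fillings_bij: "g \<in> standard_fillings lam V \<Longrightarrow> bij_betw g lam V"
  and standard_fillings_outside: "g \<in> standard_fillings lam V \<Longrightarrow> x \<notin> lam \<Longrightarrow> g x = 0"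
  unfolding standard_fillings_def by blast+

lemma SYT_eq_standard_fillings: "SYT lam = standard_fillings lam {1..card lam}"
  unfolding SYT_def standard_fillings_def box_precedes_def by blast

lemma D_standard_iff:
  "D_standard n pos \<longleftrightarrow> (\<forall>a\<in>entries n. \<forall>b\<in>entries n. box_precedes (pos a) (pos b) \<longrightarrow> a < b)"
  unfolding D_standard_def box_precedes_def by blast

lemma obtain_strict_mono_enumeration:
  fixes V :: "'a::linorder set"
  assumes "finite V"
  obtains \<psi> where "strict_mono_on {1..card V} \<psi>" "bij_betw \<psi> {1..card V} V"
proof
  define xs where "xs = sorted_list_of_set V"
  have sorted: "sorted_wrt (<) xs" and len: "length xs = card V" and set: "set xs = V"
    using assms by (auto simp: xs_def)
  show "strict_mono_on {1..card V} (\<lambda>i. xs ! (i - 1))"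
    unfolding strict_mono_on_def using sorted_wrt_nth_less[OF sorted] len by auto
  have "bij_betw (\<lambda>i. i - 1) {1..card V} {..<length xs}"
    by (rule bij_betw_byWitness[where f' = Suc]) (auto simp: len)
  moreover have "bij_betw ((!) xs) {..<length xs} V"
    using bij_betw_nth[of xs _ "set xs"] set by (simp add: xs_def)
  ultimately show "bij_betw (\<lambda>i. xs ! (i - 1)) {1..card V} V"
    using bij_betw_trans unfolding comp_def by blast
qed

definition relabel :: "('a \<Rightarrow> 'b::zero) \<Rightarrow> box set \<Rightarrow> (box \<Rightarrow> 'a) \<Rightarrow> box \<Rightarrow> 'b" where
  "relabel \<psi> lam g x = (if x \<in> lam then \<psi> (g x) else 0)"

lemma relabel_standard_filling:
  assumes g: "g \<in> standard_fillings lam A"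
    and mono: "strict_mono_on A \<psi>" and bij: "bij_betw \<psi> A B"
  shows "relabel \<psi> lam g \<in> standard_fillings lam B"
proof -
  have range: "g x \<in> A" if "x \<in> lam" for x
    using standard_fillings_bij[OF g] that by (rule bij_betw_apply)
  have "bij_betw (\<psi> \<circ> g) lam B"
    using standard_fillings_bij[OF g] bij by (rule bij_betw_trans)
  then have "bij_betw (relabel \<psi> lam g) lam B"
    by (rule bij_betw_cong[THEN iffD1, rotated]) (simp add: relabel_def)
  moreover have "relabel \<psi> lam g x < relabel \<psi> lam g y"
    if "x \<in> lam" "y \<in> lam" "box_precedes x y" for x y
    using g that strict_mono_on_less[OF mono range[OF that(1)] range[OF that(2)]]
    by (simp add: relabel_def standard_fillings_def)
  ultimately show ?thesis
    by (simp add: standard_fillings_def relabel_def)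
qed

lemma relabel_relabel:
  assumes "g \<in> standard_fillings lam A" and "\<And>a. a \<in> A \<Longrightarrow> \<phi> (\<psi> a) = a"
  shows "relabel \<phi> lam (relabel \<psi> lam g) = g"
  using assms standard_fillings_outside bij_betw_apply[OF standard_fillings_bij]
  by (fastforce simp: relabel_def)

lemma strict_mono_on_the_inv_into:
  fixes \<psi> :: "'a::linorder \<Rightarrow> 'b::linorder"
  assumes mono: "strict_mono_on A \<psi>" and bij: "bij_betw \<psi> A B"
  shows "strict_mono_on B (the_inv_into A \<psi>)"
proof (rule strict_mono_onI)
  fix b b' assume "b \<in> B" "b' \<in> B" "b < b'"
  then show "the_inv_into A \<psi> b < the_inv_into A \<psi> b'"
    using strict_mono_on_less[OF mono] bij_betw_apply[OF bij_betw_the_inv_into[OF bij]]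
      f_the_inv_into_f_bij_betw[OF bij] by metis
qed

lemma card_standard_fillings:
  fixes V :: "'a::{linorder,zero} set"
  assumes "finite V" and "card V = card lam"
  shows "card (standard_fillings lam V) = f_shape lam"
proof -
  obtain \<psi> where mono: "strict_mono_on {1..card lam} \<psi>" and bij: "bij_betw \<psi> {1..card lam} V"
    using obtain_strict_mono_enumeration[OF assms(1)] assms(2) by metis
  let ?\<phi> = "the_inv_into {1..card lam} \<psi>"
  have "bij_betw (relabel \<psi> lam) (SYT lam) (standard_fillings lam V)"
  proof (rule bij_betw_byWitness[where f' = "relabel ?\<phi> lam"])
    show "\<forall>g\<in>SYT lam. relabel ?\<phi> lam (relabel \<psi> lam g) = g"
      using relabel_relabel the_inv_into_f_f bij unfolding SYT_eq_standard_fillings bij_betw_def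
      by metis
    show "\<forall>h\<in>standard_fillings lam V. relabel \<psi> lam (relabel ?\<phi> lam h) = h"
      using relabel_relabel f_the_inv_into_f_bij_betw[OF bij] by metis
    show "relabel \<psi> lam ` SYT lam \<subseteq> standard_fillings lam V"
      using relabel_standard_filling[OF _ mono bij] by (auto simp: SYT_eq_standard_fillings)
    show "relabel ?\<phi> lam ` standard_fillings lam V \<subseteq> SYT lam"
      using relabel_standard_filling[OF _ strict_mono_on_the_inv_into[OF mono bij]
          bij_betw_the_inv_into[OF bij]]
      by (auto simp: SYT_eq_standard_fillings)
  qed
  then show ?thesis
    unfolding f_shape_def by (metis bij_betw_same_card)
qed

lemma card_subsets_parity:
  assumes "finite A" and "A \<noteq> {}"
  shows "card {S. S \<subseteq> A \<and> even (card S) = ev} = 2 ^ (card A - 1)"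
proof -
  let ?E = "{S. S \<subseteq> A \<and> even (card S)}" and ?O = "{S. S \<subseteq> A \<and> odd (card S)}"
  have "card ?E = card ?O"
    using card_subsupersets_even_odd[of A "{}"] assms by auto
  moreover have "card ?E + card ?O = card (Pow A)"
    by (subst card_Un_disjoint[symmetric]) (use assms in \<open>auto intro: arg_cong[of _ _ card]\<close>)
  moreover have "card (Pow A) = 2 * 2 ^ (card A - 1)"
    using assms by (simp add: card_Pow card_gt_0_iff flip: power_Suc)
  ultimately show ?thesis by (cases ev) auto
qed

section \<open>Translations and reflections of diagrams\<close>

lemma shift_eq_image_plus: "shift t S = (\<lambda>x. x + t) ` S"
proof -
  have "(fst x + fst t, snd x + snd t) = x + t" for x :: box by (simp add: prod_eq_iff)
  then show ?thesis by (simp add: shift_def case_prod_unfold)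
qed

lemma translate_image_eq_imp_eq:
  fixes a b :: "int \<times> int"
  assumes "finite L" and "L \<noteq> {}" and "(\<lambda>x. x + a) ` L = (\<lambda>x. x + b) ` L"
  shows "a = b"
proof -
  have "Min (fst ` (\<lambda>x. x + c) ` L) = Min (fst ` L) + fst c"
    and "Min (snd ` (\<lambda>x. x + c) ` L) = Min (snd ` L) + snd c" for c
    using assms(1,2) by (simp_all add: image_image Min_add_commute)
  then show ?thesis
    using assms(3) by (metis add_left_cancel prod_eq_iff)
qed

lemma skew_diagram_translate:
  assumes "skew_diagram S"
  shows "skew_diagram ((\<lambda>x. x + t) ` S)"
  unfolding skew_diagram_def
proof (intro conjI allI impI)
  show "finite ((\<lambda>x. x + t) ` S)"
    using assms by (simp add: skew_diagram_def)
  fix i j i' j' a b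
  assume A: "(i, j) \<in> (\<lambda>x. x + t) ` S" "(i', j') \<in> (\<lambda>x. x + t) ` S"
    "i \<le> a" "a \<le> i'" "j \<le> b" "b \<le> j'"
  from A(1,2) obtain x x' where "x \<in> S" "x' \<in> S" "(i, j) = x + t" "(i', j') = x' + t"
    by blast
  then have "(i - fst t, j - snd t) \<in> S" "(i' - fst t, j' - snd t) \<in> S"
    by (auto simp: prod_eq_iff)
  then have "(a - fst t, b - snd t) \<in> S"
    using assms A(3-6) unfolding skew_diagram_def by (meson diff_right_mono)
  then show "(a, b) \<in> (\<lambda>x. x + t) ` S"
    by (rule rev_image_eqI) (simp add: prod_eq_iff)
qed

lemma skew_diagram_reflect:
  assumes "skew_diagram S"
  shows "skew_diagram ((\<lambda>x. c - x) ` S)"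
  unfolding skew_diagram_def
proof (intro conjI allI impI)
  show "finite ((\<lambda>x. c - x) ` S)"
    using assms by (simp add: skew_diagram_def)
  fix i j i' j' a b
  assume A: "(i, j) \<in> (\<lambda>x. c - x) ` S" "(i', j') \<in> (\<lambda>x. c - x) ` S"
    "i \<le> a" "a \<le> i'" "j \<le> b" "b \<le> j'"
  from A(1,2) obtain x x' where "x \<in> S" "x' \<in> S" "(i, j) = c - x" "(i', j') = c - x'"
    by blast
  then have "(fst c - i, snd c - j) \<in> S" "(fst c - i', snd c - j') \<in> S"
    by (auto simp: prod_eq_iff)
  then have "(fst c - a, snd c - b) \<in> S"
    using assms A(3-6) unfolding skew_diagram_def by (meson diff_left_mono)
  then show "(a, b) \<in> (\<lambda>x. c - x) ` S"
    by (rule rev_image_eqI) (simp add: prod_eq_iff)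
qed

lemma skew_diagram_Un_southwest:
  assumes "skew_diagram P" and "skew_diagram Q"
    and southwest: "\<And>y z. y \<in> P \<Longrightarrow> z \<in> Q \<Longrightarrow> fst y < fst z \<and> snd z < snd y"
  shows "skew_diagram (P \<union> Q)"
  unfolding skew_diagram_def
proof (intro conjI allI impI)
  show "finite (P \<union> Q)"
    using assms(1,2) by (simp add: skew_diagram_def)
  fix i j i' j' a b
  assume A: "(i, j) \<in> P \<union> Q" "(i', j') \<in> P \<union> Q" "i \<le> a" "a \<le> i'" "j \<le> b" "b \<le> j'"
  have "\<not> ((i, j) \<in> P \<and> (i', j') \<in> Q)"
    using southwest[of "(i, j)" "(i', j')"] A(5,6) by auto
  moreover have "\<not> ((i, j) \<in> Q \<and> (i', j') \<in> P)"
    using southwest[of "(i', j')" "(i, j)"] A(3,4) by auto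
  ultimately consider "(i, j) \<in> P" "(i', j') \<in> P" | "(i, j) \<in> Q" "(i', j') \<in> Q"
    using A(1,2) by blast
  then show "(a, b) \<in> P \<union> Q"
  proof cases
    case 1
    then have "(a, b) \<in> P"
      using A(3-6) assms(1) unfolding skew_diagram_def by blast
    then show ?thesis ..
  next
    case 2
    then have "(a, b) \<in> Q"
      using A(3-6) assms(2) unfolding skew_diagram_def by blast
    then show ?thesis ..
  qed
qed

lemma skew_diagram_positive_fst_less_snd:
  assumes skew: "skew_diagram P" and pos: "\<And>y. y \<in> P \<Longrightarrow> content y > 0"
    and "w \<in> P" and "y \<in> P"
  shows "fst w < snd y"
proof -
  obtain a b c d where w: "w = (a, b)" and y: "y = (c, d)" by (cases w, cases y)
  have "a < b" "c < d"
    using pos[OF \<open>w \<in> P\<close>] pos[OF \<open>y \<in> P\<close>] by (simp_all add: w y content_def)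
  moreover have "a < d" if "c < a" "d < b"
  proof -
    have "(a, d) \<in> P"
      using skew \<open>w \<in> P\<close> \<open>y \<in> P\<close> that unfolding skew_diagram_def w y
      by (meson less_imp_le order_refl)
    then show ?thesis using pos by (fastforce simp: content_def)
  qed
  ultimately show ?thesis
    by (cases "c < a \<and> d < b") (auto simp: w y)
qed

text \<open>A diagram of positive contents lies strictly above the diagonal, so its point reflection
  through a far enough diagonal point lies strictly south-west of it.\<close>
lemma obtain_reflection_southwest:
  assumes skew: "skew_diagram P" and pos: "\<And>y. y \<in> P \<Longrightarrow> content y > 0"
  obtains s where "\<And>y z. y \<in> P \<Longrightarrow> z \<in> P \<Longrightarrow> fst y < fst ((s, s) - z) \<and> snd ((s, s) - z) < snd y"
proof (cases "P = {}")
  case False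
  define R where "R = Max (fst ` P)"
  have fin: "finite P" using skew by (simp add: skew_diagram_def)
  have fst_le: "fst y \<le> R" if "y \<in> P" for y
    using fin that by (simp add: R_def)
  have "R \<in> fst ` P"
    using fin False by (simp add: R_def)
  then obtain w where "w \<in> P" "fst w = R" by blast
  then have snd_gt: "R < snd y" if "y \<in> P" for y
    using skew_diagram_positive_fst_less_snd[OF skew pos _ that] by metis
  show ?thesis
  proof (rule that[of "2 * R + 1"])
    fix y z assume "y \<in> P" "z \<in> P"
    then show "fst y < fst ((2 * R + 1, 2 * R + 1) - z) \<and> snd ((2 * R + 1, 2 * R + 1) - z) < snd y"
      using fst_le[of y] fst_le[of z] snd_gt[of y] snd_gt[of z] by simp
  qed
qed simp

section \<open>Sign transversals\<close>

definition sign_transversal :: "nat \<Rightarrow> int set \<Rightarrow> bool" where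
  "sign_transversal n V \<longleftrightarrow> V \<subseteq> entries n \<and> (\<forall>k\<in>entries n. - k \<in> V \<longleftrightarrow> k \<notin> V)"

definition signed_entries :: "nat \<Rightarrow> nat set \<Rightarrow> int set" where
  "signed_entries n S = (\<lambda>j. - int j) ` S \<union> int ` ({1..n} - S)"

lemma finite_entries: "finite (entries n)"
  unfolding entries_def by (rule finite_subset[of _ "{- int n..int n}"]) auto

lemma uminus_entries [simp]: "- k \<in> entries n \<longleftrightarrow> k \<in> entries n"
  unfolding entries_def by auto

lemma mem_signed_entries:
  assumes "S \<subseteq> {1..n}"
  shows "k \<in> signed_entries n S \<longleftrightarrow> k \<in> entries n \<and> (k < 0 \<longleftrightarrow> nat \<bar>k\<bar> \<in> S)"
proof
  assume "k \<in> signed_entries n S"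
  then show "k \<in> entries n \<and> (k < 0 \<longleftrightarrow> nat \<bar>k\<bar> \<in> S)"
    using assms unfolding signed_entries_def entries_def by auto
next
  assume k: "k \<in> entries n \<and> (k < 0 \<longleftrightarrow> nat \<bar>k\<bar> \<in> S)"
  show "k \<in> signed_entries n S"
  proof (cases "k < 0")
    case True
    then have "k = - int (nat \<bar>k\<bar>)" "nat \<bar>k\<bar> \<in> S" using k by auto
    then show ?thesis unfolding signed_entries_def by blast
  next
    case False
    then have "k = int (nat \<bar>k\<bar>)" "nat \<bar>k\<bar> \<in> {1..n} - S"
      using k by (auto simp: entries_def)
    then show ?thesis unfolding signed_entries_def by blast
  qed
qed

lemma sign_transversal_signed_entries:
  assumes "S \<subseteq> {1..n}"
  shows "sign_transversal n (signed_entries n S)"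
  unfolding sign_transversal_def by (auto simp: mem_signed_entries[OF assms] entries_def)

lemma negative_signed_entries:
  assumes "S \<subseteq> {1..n}"
  shows "{k \<in> signed_entries n S. k < 0} = (\<lambda>j. - int j) ` S"
  using assms unfolding signed_entries_def by force

lemma sign_transversal_eq_signed_entries:
  assumes "sign_transversal n V"
  shows "V = signed_entries n {j \<in> {1..n}. - int j \<in> V}"
proof (rule set_eqI)
  fix k
  have "k \<in> V \<longleftrightarrow> k \<in> entries n \<and> (k < 0 \<longleftrightarrow> - \<bar>k\<bar> \<in> V)"
    using assms unfolding sign_transversal_def by (cases "k < 0") (auto simp: entries_def)
  then show "k \<in> V \<longleftrightarrow> k \<in> signed_entries n {j \<in> {1..n}. - int j \<in> V}"
    by (subst mem_signed_entries) (auto simp: entries_def)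
qed

lemma card_negative_signed_entries:
  assumes "S \<subseteq> {1..n}"
  shows "card {k \<in> signed_entries n S. k < 0} = card S"
  by (simp add: negative_signed_entries[OF assms] card_image inj_on_def)

lemma card_signed_entries:
  assumes "S \<subseteq> {1..n}"
  shows "card (signed_entries n S) = n"
proof -
  have "card (signed_entries n S) = card ((\<lambda>j. - int j) ` S) + card (int ` ({1..n} - S))"
    unfolding signed_entries_def
    by (rule card_Un_disjoint) (use assms in \<open>auto intro: finite_subset\<close>)
  also have "\<dots> = card S + card ({1..n} - S)"
    by (simp add: card_image inj_on_def)
  also have "\<dots> = n"
    using assms card_mono[OF finite_atLeastAtMost assms] by (simp add: card_Diff_subset finite_subset)
  finally show ?thesis .
qed

lemma finite_sign_transversal: "sign_transversal n V \<Longrightarrow> finite V"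
  using finite_subset[OF _ finite_entries] by (auto simp: sign_transversal_def)

lemma card_sign_transversal:
  assumes "sign_transversal n V"
  shows "card V = n"
proof -
  define S where "S = {j \<in> {1..n}. - int j \<in> V}"
  have "S \<subseteq> {1..n}" by (auto simp: S_def)
  then show ?thesis
    using sign_transversal_eq_signed_entries[OF assms] card_signed_entries by (metis S_def)
qed

lemma card_negative_sign_transversal:
  assumes "sign_transversal n V"
  shows "card {k \<in> V. k < 0} = card {j \<in> {1..n}. - int j \<in> V}"
proof -
  define S where "S = {j \<in> {1..n}. - int j \<in> V}"
  have "V = signed_entries n S"
    using sign_transversal_eq_signed_entries[OF assms] by (simp add: S_def)
  moreover have "S \<subseteq> {1..n}" by (auto simp: S_def)
  ultimately show ?thesis
    using card_negative_signed_entries by (metis S_def)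
qed

lemma card_sign_transversals_parity:
  assumes "n \<ge> 1"
  shows "card {V. sign_transversal n V \<and> even (card {k \<in> V. k < 0}) = ev} = 2 ^ (n - 1)"
proof -
  have "bij_betw (signed_entries n) {S. S \<subseteq> {1..n} \<and> even (card S) = ev}
      {V. sign_transversal n V \<and> even (card {k \<in> V. k < 0}) = ev}"
  proof (rule bij_betw_byWitness[where f' = "\<lambda>V. {j \<in> {1..n}. - int j \<in> V}"])
    show "\<forall>S\<in>{S. S \<subseteq> {1..n} \<and> even (card S) = ev}. {j \<in> {1..n}. - int j \<in> signed_entries n S} = S"
      by (auto simp: signed_entries_def)
    show "\<forall>V\<in>{V. sign_transversal n V \<and> even (card {k \<in> V. k < 0}) = ev}.
        signed_entries n {j \<in> {1..n}. - int j \<in> V} = V"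
      using sign_transversal_eq_signed_entries by blast
    show "signed_entries n ` {S. S \<subseteq> {1..n} \<and> even (card S) = ev}
        \<subseteq> {V. sign_transversal n V \<and> even (card {k \<in> V. k < 0}) = ev}"
      using sign_transversal_signed_entries card_negative_signed_entries by auto
    show "(\<lambda>V. {j \<in> {1..n}. - int j \<in> V}) ` {V. sign_transversal n V \<and> even (card {k \<in> V. k < 0}) = ev}
        \<subseteq> {S. S \<subseteq> {1..n} \<and> even (card S) = ev}"
      using card_negative_sign_transversal by auto
  qed
  then show ?thesis
    using card_subsets_parity[of "{1..n}" ev] assms by (simp add: bij_betw_same_card)
qed

section \<open>The positive half of a D-Young tableau\<close>

definition positive_entries :: "nat \<Rightarrow> (int \<Rightarrow> box) \<Rightarrow> int set" where
  "positive_entries n p = {k \<in> entries n. content (p k) > 0}"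

lemma pos_boxes_eq_image: "pos_boxes n p = p ` positive_entries n p"
  unfolding pos_boxes_def positive_entries_def by auto

lemma num_neg_in_pos_eq: "num_neg_in_pos n p = card {k \<in> positive_entries n p. k < 0}"
  unfolding num_neg_in_pos_def positive_entries_def by (rule arg_cong[where f = card]) blast

lemma min_nonneg_content_eq:
  assumes "\<And>k. k \<in> entries n \<Longrightarrow> content (p k) \<noteq> 0"
  shows "min_nonneg_content n p = Min (content ` p ` positive_entries n p)"
proof -
  have "{k \<in> entries n. content (p k) \<ge> 0} = positive_entries n p"
    using assms by (auto simp: positive_entries_def less_le)
  moreover have "{content (p k) |k. k \<in> entries n \<and> content (p k) \<ge> 0}
      = (\<lambda>k. content (p k)) ` {k \<in> entries n. content (p k) \<ge> 0}"
    by blast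
  ultimately show ?thesis by (simp add: min_nonneg_content_def image_image)
qed

lemma content_nonzero_if_min_nonneg_content_pos:
  assumes "min_nonneg_content n p > 0" and "k \<in> entries n"
  shows "content (p k) \<noteq> 0"
proof
  assume zero: "content (p k) = 0"
  let ?C = "{content (p k) |k. k \<in> entries n \<and> content (p k) \<ge> 0}"
  have "?C \<subseteq> content ` p ` entries n" by blast
  then have fin: "finite ?C" using finite_entries finite_subset by blast
  have "0 \<in> ?C" using zero assms(2) by (auto intro!: exI[of _ k])
  then have "min_nonneg_content n p \<le> 0"
    unfolding min_nonneg_content_def using Min_le[OF fin] by blast
  then show False using assms(1) by simp
qed

lemma sign_transversal_positive_entries:
  assumes "D_young_tableau n p" and "\<And>k. k \<in> entries n \<Longrightarrow> content (p k) \<noteq> 0"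
  shows "sign_transversal n (positive_entries n p)"
  unfolding sign_transversal_def
proof (intro conjI ballI)
  show "positive_entries n p \<subseteq> entries n"
    by (auto simp: positive_entries_def)
  fix k assume k: "k \<in> entries n"
  have "content (p (- k)) = - content (p k)"
    using assms(1) k unfolding D_young_tableau_def by blast
  then show "- k \<in> positive_entries n p \<longleftrightarrow> k \<notin> positive_entries n p"
    using assms(2)[OF k] k by (auto simp: positive_entries_def)
qed

lemma inj_on_positive_entries:
  assumes "D_young_tableau n p"
  shows "inj_on p (positive_entries n p)"
proof (rule inj_onI, rule ccontr)
  fix a b assume ab: "a \<in> positive_entries n p" "b \<in> positive_entries n p" "p a = p b" "a \<noteq> b"
  then have "content (p a) = 0"
    using assms unfolding D_young_tableau_def positive_entries_def by blast
  then show False using ab(1) by (simp add: positive_entries_def)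
qed

definition positive_offset :: "box set \<Rightarrow> (int \<Rightarrow> box) \<Rightarrow> int \<times> int" where
  "positive_offset lam p = (SOME t. pos_boxes (card lam) p = shift t lam)"

definition positive_filling :: "box set \<Rightarrow> (int \<Rightarrow> box) \<Rightarrow> box \<Rightarrow> int" where
  "positive_filling lam p x =
     (if x \<in> lam then the_inv_into (positive_entries (card lam) p) p (x + positive_offset lam p) else 0)"

lemma positive_offset_eqI:
  assumes "finite lam" and "lam \<noteq> {}" and "p ` positive_entries (card lam) p = (\<lambda>x. x + t) ` lam"
  shows "positive_offset lam p = t"
proof -
  have "pos_boxes (card lam) p = shift t lam"
    using assms(3) by (simp add: pos_boxes_eq_image shift_eq_image_plus)
  then have "pos_boxes (card lam) p = shift (positive_offset lam p) lam"
    unfolding positive_offset_def by (rule someI)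
  then show ?thesis
    using translate_image_eq_imp_eq[OF assms(1,2)] assms(3)
    by (simp add: pos_boxes_eq_image shift_eq_image_plus)
qed

lemma positive_filling_standard:
  assumes young: "D_young_tableau (card lam) p" and standard: "D_standard (card lam) p"
    and image: "p ` positive_entries (card lam) p = (\<lambda>x. x + positive_offset lam p) ` lam"
  shows "positive_filling lam p \<in> standard_fillings lam (positive_entries (card lam) p)"
    and "\<And>x. x \<in> lam \<Longrightarrow> p (positive_filling lam p x) = x + positive_offset lam p"
proof -
  define V where "V = positive_entries (card lam) p"
  define t where "t = positive_offset lam p"
  have inj: "inj_on p V"
    using inj_on_positive_entries[OF young] by (simp add: V_def)
  have "bij_betw (the_inv_into V p) ((\<lambda>x. x + t) ` lam) V"
    using bij_betw_the_inv_into[of p V] inj image by (simp add: V_def t_def bij_betw_def)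
  moreover have "bij_betw (\<lambda>x. x + t) lam ((\<lambda>x. x + t) ` lam)"
    by (simp add: bij_betw_def inj_on_def)
  ultimately have "bij_betw (the_inv_into V p \<circ> (\<lambda>x. x + t)) lam V"
    by (rule bij_betw_trans[rotated])
  then have bij: "bij_betw (positive_filling lam p) lam V"
    by (rule bij_betw_cong[THEN iffD1, rotated]) (simp add: positive_filling_def V_def t_def)
  show p_filling: "p (positive_filling lam p x) = x + positive_offset lam p" if "x \<in> lam" for x
    using that f_the_inv_into_f[OF inj] image by (simp add: positive_filling_def V_def t_def)
  have "positive_filling lam p x < positive_filling lam p y"
    if "x \<in> lam" "y \<in> lam" "box_precedes x y" for x y
  proof -
    have "positive_filling lam p z \<in> entries (card lam)" if "z \<in> lam" for z
      using bij that by (auto simp: bij_betw_def V_def positive_entries_def)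
    moreover have "box_precedes (p (positive_filling lam p x)) (p (positive_filling lam p y))"
      using that by (simp add: p_filling)
    ultimately show ?thesis
      using standard that(1,2) unfolding D_standard_iff by blast
  qed
  then show "positive_filling lam p \<in> standard_fillings lam (positive_entries (card lam) p)"
    using bij by (simp add: standard_fillings_def positive_filling_def V_def)
qed

locale T_raw_member =
  fixes lam :: "box set" and m :: nat and ev :: bool and p :: "int \<Rightarrow> box"
  assumes finite_lam: "finite lam" and nonempty_lam: "lam \<noteq> {}" and m_pos: "m \<ge> 1"
    and member: "p \<in> T_raw lam m ev"
begin

abbreviation "n \<equiv> card lam"
abbreviation "offset \<equiv> positive_offset lam p"

lemma young: "D_young_tableau n p" and standard: "D_standard n p"
  using member by (simp_all add: T_raw_def)

lemma content_nonzero: "k \<in> entries n \<Longrightarrow> content (p k) \<noteq> 0"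
  by (rule content_nonzero_if_min_nonneg_content_pos) (use member m_pos in \<open>simp_all add: T_raw_def\<close>)

lemma positive_image: "p ` positive_entries n p = (\<lambda>x. x + offset) ` lam"
proof -
  obtain t where "pos_boxes n p = shift t lam"
    using member by (auto simp: T_raw_def)
  then have image: "p ` positive_entries n p = (\<lambda>x. x + t) ` lam"
    by (simp add: pos_boxes_eq_image shift_eq_image_plus)
  then show ?thesis
    using positive_offset_eqI[OF finite_lam nonempty_lam image] by simp
qed

lemma filling_standard: "positive_filling lam p \<in> standard_fillings lam (positive_entries n p)"
  and p_filling: "x \<in> lam \<Longrightarrow> p (positive_filling lam p x) = x + offset"
  using positive_filling_standard[OF young standard positive_image] by blast+

lemma filling_image: "positive_filling lam p ` lam = positive_entries n p"
  using filling_standard by (simp add: standard_fillings_def bij_betw_def)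

lemma content_offset: "Min (content ` lam) + content offset = int m"
proof -
  have "int m = Min (content ` p ` positive_entries n p)"
    using member min_nonneg_content_eq[OF content_nonzero] by (simp add: T_raw_def)
  also have "\<dots> = Min ((\<lambda>x. content x + content offset) ` lam)"
    by (simp add: positive_image image_image)
  also have "\<dots> = Min (content ` lam) + content offset"
    using finite_lam nonempty_lam by (rule Min_add_commute)
  finally show ?thesis by simp
qed

lemma sign_transversal: "sign_transversal n (positive_entries n p)"
  using sign_transversal_positive_entries[OF young content_nonzero] .

lemma parity: "even (card {k \<in> positive_entries n p. k < 0}) = ev"
  using member by (simp add: T_raw_def num_neg_in_pos_eq)

end

lemma positive_filling_eq_if_diagonal_translate:
  assumes p: "T_raw_member lam m ev p" and q: "T_raw_member lam m ev q"
    and same_entries: "positive_entries (card lam) q = positive_entries (card lam) p"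
    and translate: "\<And>k. k \<in> positive_entries (card lam) p \<Longrightarrow> q k = p k + (s, s)"
  shows "positive_filling lam p = positive_filling lam q"
proof -
  interpret p: T_raw_member lam m ev p by (fact p)
  interpret q: T_raw_member lam m ev q by (fact q)
  have "(\<lambda>x. x + q.offset) ` lam = (\<lambda>y. y + (s, s)) ` p ` positive_entries p.n p"
    using q.positive_image same_entries translate by (simp add: image_image cong: image_cong)
  also have "\<dots> = (\<lambda>x. x + (p.offset + (s, s))) ` lam"
    by (simp add: p.positive_image image_image add.assoc)
  finally have offset: "q.offset = p.offset + (s, s)"
    by (rule translate_image_eq_imp_eq[OF p.finite_lam p.nonempty_lam])
  show ?thesis
  proof
    fix x show "positive_filling lam p x = positive_filling lam q x"
    proof (cases "x \<in> lam")
      case True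
      then have k: "positive_filling lam p x \<in> positive_entries q.n q"
        using p.filling_image same_entries by blast
      have "q (positive_filling lam p x) = x + q.offset"
        using translate k same_entries p.p_filling[OF True] by (simp add: offset add.assoc)
      then show ?thesis
        using True k inj_on_positive_entries[OF q.young]
        by (simp add: positive_filling_def the_inv_into_f_eq)
    qed (simp add: positive_filling_def)
  qed
qed

lemma same_D_tableau_if_positive_filling_eq:
  assumes p: "T_raw_member lam m ev p" and q: "T_raw_member lam m ev q"
    and eq: "positive_filling lam p = positive_filling lam q"
  shows "same_D_tableau (card lam) p q"
proof -
  interpret p: T_raw_member lam m ev p by (fact p)
  interpret q: T_raw_member lam m ev q by (fact q)
  have same_entries: "positive_entries p.n p = positive_entries p.n q"
    by (metis eq p.filling_image q.filling_image)
  define s where "s = fst q.offset - fst p.offset"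
  have "content p.offset = content q.offset"
    using p.content_offset q.content_offset by linarith
  then have offset: "q.offset = p.offset + (s, s)"
    by (simp add: s_def content_def prod_eq_iff)
  then have translate: "q k = p k + (s, s)" if k: "k \<in> positive_entries p.n p" for k
  proof -
    obtain x where x: "x \<in> lam" "k = positive_filling lam p x"
      using k unfolding p.filling_image[symmetric] by blast
    then have "q k = x + q.offset"
      using q.p_filling by (simp add: eq)
    also have "\<dots> = p k + (s, s)"
      using x p.p_filling by (simp add: offset add.assoc)
    finally show ?thesis .
  qed
  have "(content (p k) > 0 \<longleftrightarrow> content (q k) > 0) \<and>
      (content (p k) > 0 \<longrightarrow> q k = (fst (p k) + s, snd (p k) + s))" if "k \<in> entries p.n" for k
  proof -
    have "k \<in> positive_entries p.n p \<longleftrightarrow> k \<in> positive_entries p.n q"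
      using same_entries by simp
    then show ?thesis
      using that translate[of k] by (auto simp: positive_entries_def prod_eq_iff)
  qed
  moreover have "\<not> has_zero_box p.n p" "\<not> has_zero_box p.n q"
    using p.content_nonzero q.content_nonzero by (auto simp: has_zero_box_def)
  ultimately show ?thesis
    unfolding same_D_tableau_def by blast
qed

lemma same_D_tableau_iff_positive_filling_eq:
  assumes p: "T_raw_member lam m ev p" and q: "T_raw_member lam m ev q"
  shows "same_D_tableau (card lam) p q \<longleftrightarrow> positive_filling lam p = positive_filling lam q"
proof
  assume "same_D_tableau (card lam) p q"
  then consider "p = q"
    | s where "\<forall>k\<in>entries (card lam). (content (p k) > 0 \<longleftrightarrow> content (q k) > 0) \<and>
          (content (p k) > 0 \<longrightarrow> q k = (fst (p k) + s, snd (p k) + s))"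
    unfolding same_D_tableau_def by blast
  then show "positive_filling lam p = positive_filling lam q"
  proof cases
    case 2
    show ?thesis
      by (rule positive_filling_eq_if_diagonal_translate[OF p q, where s = s])
        (use 2 in \<open>auto simp: positive_entries_def prod_eq_iff\<close>)
  qed simp
qed (rule same_D_tableau_if_positive_filling_eq[OF p q])

section \<open>Extending a filling by its reflection\<close>

lemma southwest_not_box_precedes:
  assumes "fst y < fst z" and "snd z < snd y"
  shows "\<not> box_precedes y z" and "\<not> box_precedes z y"
  using assms by (auto simp: box_precedes_def)

locale reflected_extension =
  fixes n :: nat and V :: "int set" and b :: "int \<Rightarrow> box" and s :: int
  assumes transversal: "sign_transversal n V"
    and inj_b: "inj_on b V"
    and skew: "skew_diagram (b ` V)"
    and content_pos: "\<And>k. k \<in> V \<Longrightarrow> content (b k) > 0"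
    and southwest: "\<And>k l. k \<in> V \<Longrightarrow> l \<in> V \<Longrightarrow> fst (b k) < fst ((s, s) - b l) \<and> snd ((s, s) - b l) < snd (b k)"
    and standard: "\<And>k l. k \<in> V \<Longrightarrow> l \<in> V \<Longrightarrow> box_precedes (b k) (b l) \<Longrightarrow> k < l"
begin

definition tableau :: "int \<Rightarrow> box" where
  "tableau k = (if k \<in> entries n then if k \<in> V then b k else (s, s) - b (- k) else (0, 0))"

lemma V_entries: "k \<in> V \<Longrightarrow> k \<in> entries n"
  and uminus_mem: "k \<in> entries n \<Longrightarrow> k \<notin> V \<Longrightarrow> - k \<in> V"
  using transversal by (auto simp: sign_transversal_def)

lemma tableau_mem: "k \<in> V \<Longrightarrow> tableau k = b k"
  and tableau_not_mem: "k \<in> entries n \<Longrightarrow> k \<notin> V \<Longrightarrow> tableau k = (s, s) - b (- k)"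
  using V_entries by (auto simp: tableau_def)

lemma positive_entries_tableau: "positive_entries n tableau = V"
proof (rule set_eqI)
  fix k
  show "k \<in> positive_entries n tableau \<longleftrightarrow> k \<in> V"
  proof (cases "k \<in> entries n \<and> k \<notin> V")
    case True
    then have "content (tableau k) < 0"
      using content_pos[OF uminus_mem] by (simp add: tableau_not_mem)
    then show ?thesis using True by (simp add: positive_entries_def)
  next
    case False
    then show ?thesis
      using content_pos V_entries by (auto simp: positive_entries_def tableau_mem)
  qed
qed

lemma tableau_uminus:
  assumes "k \<in> entries n"
  shows "content (tableau (- k)) = - content (tableau k)"
proof (cases "k \<in> V")
  case True
  then have "- k \<notin> V" using transversal assms by (simp add: sign_transversal_def)
  then show ?thesis using True assms by (simp add: tableau_mem tableau_not_mem)
next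
  case False
  then show ?thesis using assms uminus_mem by (simp add: tableau_mem tableau_not_mem)
qed

lemma tableau_southwest:
  assumes "k \<in> V" and "l \<in> entries n" and "l \<notin> V"
  shows "fst (tableau k) < fst (tableau l) \<and> snd (tableau l) < snd (tableau k)"
  using southwest[OF assms(1) uminus_mem[OF assms(2,3)]] assms
  by (simp add: tableau_mem tableau_not_mem)

lemma image_tableau: "tableau ` entries n = b ` V \<union> (\<lambda>x. (s, s) - x) ` b ` V"
proof
  show "tableau ` entries n \<subseteq> b ` V \<union> (\<lambda>x. (s, s) - x) ` b ` V"
    using uminus_mem by (auto simp: tableau_def)
  show "b ` V \<union> (\<lambda>x. (s, s) - x) ` b ` V \<subseteq> tableau ` entries n"
  proof -
    have "b k \<in> tableau ` entries n" if "k \<in> V" for k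
      using that V_entries by (metis image_eqI tableau_mem)
    moreover have "(s, s) - b k \<in> tableau ` entries n" if "k \<in> V" for k
    proof -
      have "- k \<in> entries n" "- k \<notin> V"
        using that transversal by (auto simp: sign_transversal_def)
      then show ?thesis by (metis image_eqI minus_minus tableau_not_mem)
    qed
    ultimately show ?thesis by blast
  qed
qed

lemma inj_on_tableau: "inj_on tableau (entries n)"
proof (rule inj_onI)
  fix k l assume k: "k \<in> entries n" and l: "l \<in> entries n" and eq: "tableau k = tableau l"
  consider "k \<in> V" "l \<in> V" | "k \<notin> V" "l \<notin> V" | "k \<in> V" "l \<notin> V" | "k \<notin> V" "l \<in> V"
    by blast
  then show "k = l"
  proof cases
    case 1
    then show ?thesis using eq inj_b by (simp add: tableau_mem inj_on_def)
  next
    case 2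
    then have "b (- k) = b (- l)" using eq k l by (simp add: tableau_not_mem)
    then show ?thesis using 2 k l uminus_mem inj_b by (metis inj_onD minus_minus)
  qed (use eq tableau_southwest k l in force)+
qed

lemma young: "D_young_tableau n tableau"
proof -
  have "fst y < fst z \<and> snd z < snd y" if "y \<in> b ` V" "z \<in> (\<lambda>x. (s, s) - x) ` b ` V" for y z
    using that southwest by blast
  then have "skew_diagram (tableau ` entries n)"
    unfolding image_tableau by (rule skew_diagram_Un_southwest[OF skew skew_diagram_reflect[OF skew]])
  moreover have "\<forall>k\<in>entries n. \<forall>l\<in>entries n. k \<noteq> l \<longrightarrow> tableau k = tableau l \<longrightarrow>
      l = - k \<and> content (tableau k) = 0"
    using inj_on_tableau unfolding inj_on_def by blast
  ultimately show ?thesis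
    using tableau_uminus unfolding D_young_tableau_def by (simp add: tableau_def)
qed

lemma D_standard_tableau: "D_standard n tableau"
  unfolding D_standard_iff
proof (intro ballI impI)
  fix k l assume k: "k \<in> entries n" and l: "l \<in> entries n"
    and precedes: "box_precedes (tableau k) (tableau l)"
  consider "k \<in> V" "l \<in> V" | "k \<notin> V" "l \<notin> V" | "k \<in> V" "l \<notin> V" | "k \<notin> V" "l \<in> V"
    by blast
  then show "k < l"
  proof cases
    case 1
    then show ?thesis using precedes standard by (simp add: tableau_mem)
  next
    case 2
    then have "- l < - k"
      using precedes standard[OF uminus_mem[OF l] uminus_mem[OF k]] k l by (simp add: tableau_not_mem)
    then show ?thesis by simp
  qed (use precedes tableau_southwest southwest_not_box_precedes k l in blast)+
qed

lemma content_tableau_nonzero: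
  assumes "k \<in> entries n"
  shows "content (tableau k) \<noteq> 0"
proof (cases "k \<in> V")
  case True
  then show ?thesis using content_pos[OF True] by (simp add: tableau_mem)
next
  case False
  then show ?thesis using content_pos[OF uminus_mem[OF assms False]] assms by (simp add: tableau_not_mem)
qed

lemma tableau_in_T_raw:
  assumes "finite lam" and "lam \<noteq> {}" and n: "n = card lam"
    and image: "b ` V = (\<lambda>x. x + t) ` lam" and content_t: "Min (content ` lam) + content t = int m"
  shows "tableau \<in> T_raw lam m (even (card {k \<in> V. k < 0}))"
proof -
  have positive_image: "tableau ` positive_entries n tableau = (\<lambda>x. x + t) ` lam"
    using image by (simp add: positive_entries_tableau tableau_mem cong: image_cong)
  have "min_nonneg_content n tableau = Min ((\<lambda>x. content x + content t) ` lam)"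
    by (simp add: min_nonneg_content_eq[OF content_tableau_nonzero] positive_image image_image)
  also have "\<dots> = int m"
    using Min_add_commute[OF assms(1,2), of content "content t"] content_t by simp
  finally have "min_nonneg_content n tableau = int m" .
  moreover have "pos_boxes n tableau = shift t lam"
    by (simp add: pos_boxes_eq_image positive_image shift_eq_image_plus)
  then have "\<exists>t'. pos_boxes n tableau = shift t' lam" ..
  ultimately show ?thesis
    using young D_standard_tableau unfolding T_raw_def n[symmetric]
    by (simp add: num_neg_in_pos_eq positive_entries_tableau)
qed

end

lemma standard_filling_inverse:
  assumes "g \<in> standard_fillings lam V"
  shows "bij_betw (the_inv_into lam g) V lam"
    and "\<And>k l. k \<in> V \<Longrightarrow> l \<in> V \<Longrightarrow> box_precedes (the_inv_into lam g k) (the_inv_into lam g l) \<Longrightarrow> k < l"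
proof -
  have bij: "bij_betw g lam V" using standard_fillings_bij[OF assms] .
  then show bij_inv: "bij_betw (the_inv_into lam g) V lam" by (rule bij_betw_the_inv_into)
  fix k l assume "k \<in> V" "l \<in> V"
    and precedes: "box_precedes (the_inv_into lam g k) (the_inv_into lam g l)"
  then have "g (the_inv_into lam g k) < g (the_inv_into lam g l)"
    using assms bij_betw_apply[OF bij_inv] by (simp add: standard_fillings_def)
  then show "k < l"
    using \<open>k \<in> V\<close> \<open>l \<in> V\<close> f_the_inv_into_f_bij_betw[OF bij] by simp
qed

lemma image_translate_inverse_filling:
  assumes "g \<in> standard_fillings lam V"
  shows "(\<lambda>k. the_inv_into lam g k + t) ` V = (\<lambda>x. x + t) ` lam"
proof -
  have "(\<lambda>k. the_inv_into lam g k + t) ` V = (\<lambda>x. x + t) ` the_inv_into lam g ` V"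
    by (simp add: image_image)
  also have "the_inv_into lam g ` V = lam"
    using standard_filling_inverse(1)[OF assms] by (simp add: bij_betw_def)
  finally show ?thesis .
qed

lemma obtain_reflected_extension:
  assumes skew: "skew_diagram lam" and V: "sign_transversal (card lam) V"
    and g: "g \<in> standard_fillings lam V" and pos: "\<And>x. x \<in> lam \<Longrightarrow> content (x + t) > 0"
  obtains s where "reflected_extension (card lam) V (\<lambda>k. the_inv_into lam g k + t) s"
proof -
  define b where "b = (\<lambda>k. the_inv_into lam g k + t)"
  note bij = standard_filling_inverse(1)[OF g]
  have image: "b ` V = (\<lambda>x. x + t) ` lam"
    using image_translate_inverse_filling[OF g] by (simp add: b_def)
  then have skew_b: "skew_diagram (b ` V)"
    using skew_diagram_translate[OF skew] by simp
  have pos_b: "content y > 0" if "y \<in> b ` V" for y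
    using that pos image by auto
  obtain s where southwest: "\<And>y z. y \<in> b ` V \<Longrightarrow> z \<in> b ` V \<Longrightarrow>
      fst y < fst ((s, s) - z) \<and> snd ((s, s) - z) < snd y"
    using obtain_reflection_southwest[OF skew_b pos_b] by blast
  have "reflected_extension (card lam) V b s"
  proof (rule reflected_extension.intro)
    show "inj_on b V"
      using bij by (simp add: b_def bij_betw_def inj_on_def)
    show "content (b k) > 0" if "k \<in> V" for k
      using pos_b that by blast
    show "fst (b k) < fst ((s, s) - b l) \<and> snd ((s, s) - b l) < snd (b k)" if "k \<in> V" "l \<in> V" for k l
      using southwest that by blast
    show "k < l" if "k \<in> V" "l \<in> V" "box_precedes (b k) (b l)" for k l
      using standard_filling_inverse(2)[OF g] that by (simp add: b_def)
  qed (fact V skew_b)+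
  then show ?thesis using that unfolding b_def by blast
qed

lemma obtain_T_raw_with_positive_filling:
  assumes skew: "skew_diagram lam" and nonempty: "lam \<noteq> {}" and m: "m \<ge> 1"
    and V: "sign_transversal (card lam) V" and g: "g \<in> standard_fillings lam V"
  obtains p where "p \<in> T_raw lam m (even (card {k \<in> V. k < 0}))" and "positive_filling lam p = g"
proof -
  have fin: "finite lam" using skew by (simp add: skew_diagram_def)
  define t where "t = (0 :: int, int m - Min (content ` lam))"
  have content_t: "content t = int m - Min (content ` lam)"
    by (simp add: t_def content_def)
  have "content (x + t) > 0" if "x \<in> lam" for x
  proof -
    have "Min (content ` lam) \<le> content x" using fin that by simp
    then show ?thesis using m by (simp add: content_t)
  qed
  then obtain s where "reflected_extension (card lam) V (\<lambda>k. the_inv_into lam g k + t) s"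
    using obtain_reflected_extension[OF skew V g] by blast
  then interpret E: reflected_extension "card lam" V "\<lambda>k. the_inv_into lam g k + t" s .
  note image = image_translate_inverse_filling[OF g, of t]
  have T_raw: "E.tableau \<in> T_raw lam m (even (card {k \<in> V. k < 0}))"
    by (rule E.tableau_in_T_raw[OF fin nonempty refl image]) (simp add: content_t)
  then have offset: "positive_offset lam E.tableau = t"
    using positive_offset_eqI[OF fin nonempty] E.positive_entries_tableau image
    by (simp add: E.tableau_mem cong: image_cong)
  have "positive_filling lam E.tableau = g"
  proof
    fix x show "positive_filling lam E.tableau x = g x"
    proof (cases "x \<in> lam")
      case True
      have "inj_on g lam" and gx: "g x \<in> V"
        using standard_fillings_bij[OF g] True by (auto simp: bij_betw_def)
      then have "E.tableau (g x) = x + t"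
        using True by (simp add: E.tableau_mem the_inv_into_f_f)
      moreover have "inj_on E.tableau V"
        using E.inj_on_tableau E.V_entries by (meson inj_on_subset subsetI)
      ultimately show ?thesis
        using True gx by (simp add: positive_filling_def offset E.positive_entries_tableau the_inv_into_f_eq)
    qed (simp add: positive_filling_def standard_fillings_outside[OF g])
  qed
  then show ?thesis using that T_raw by blast
qed

section \<open>Counting\<close>

lemma card_quotient_eq_card_image:
  assumes "\<And>x y. x \<in> A \<Longrightarrow> y \<in> A \<Longrightarrow> (x, y) \<in> R \<longleftrightarrow> f x = f y" and "R \<subseteq> A \<times> A"
  shows "card (A // R) = card (f ` A)"
proof -
  have "A // R = (\<lambda>v. {y \<in> A. f y = v}) ` f ` A"
    unfolding quotient_def using assms by (auto; fastforce)
  moreover have "inj_on (\<lambda>v. {y \<in> A. f y = v}) (f ` A)"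
    unfolding inj_on_def by blast
  ultimately show ?thesis by (simp add: card_image)
qed

lemma finite_standard_fillings:
  assumes "finite lam" and "finite V"
  shows "finite (standard_fillings lam V)"
proof (rule finite_subset[OF _ finite_set_of_finite_funs[OF assms, of 0]])
  show "standard_fillings lam V \<subseteq> {g. \<forall>x. (x \<in> lam \<longrightarrow> g x \<in> V) \<and> (x \<notin> lam \<longrightarrow> g x = 0)}"
    using standard_fillings_bij standard_fillings_outside by (blast dest: bij_betw_apply)
qed

lemma positive_filling_image_T_raw:
  assumes skew: "skew_diagram lam" and nonempty: "lam \<noteq> {}" and m: "m \<ge> 1"
  shows "positive_filling lam ` T_raw lam m ev =
    (\<Union>V \<in> {V. sign_transversal (card lam) V \<and> even (card {k \<in> V. k < 0}) = ev}. standard_fillings lam V)"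
proof
  have fin: "finite lam" using skew by (simp add: skew_diagram_def)
  show "positive_filling lam ` T_raw lam m ev \<subseteq> (\<Union>V \<in> {V. sign_transversal (card lam) V \<and>
      even (card {k \<in> V. k < 0}) = ev}. standard_fillings lam V)"
  proof clarify
    fix p assume "p \<in> T_raw lam m ev"
    then interpret T_raw_member lam m ev p
      using fin nonempty m by unfold_locales
    show "positive_filling lam p \<in> (\<Union>V \<in> {V. sign_transversal (card lam) V \<and>
        even (card {k \<in> V. k < 0}) = ev}. standard_fillings lam V)"
    proof (rule UN_I)
      show "positive_entries n p \<in> {V. sign_transversal (card lam) V \<and> even (card {k \<in> V. k < 0}) = ev}"
        using sign_transversal parity by simp
    qed (rule filling_standard)
  qed
  show "(\<Union>V \<in> {V. sign_transversal (card lam) V \<and> even (card {k \<in> V. k < 0}) = ev}.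
      standard_fillings lam V) \<subseteq> positive_filling lam ` T_raw lam m ev"
  proof clarify
    fix V g assume V: "sign_transversal (card lam) V" and g: "g \<in> standard_fillings lam V"
    obtain p where "p \<in> T_raw lam m (even (card {k \<in> V. k < 0}))" and "positive_filling lam p = g"
      by (rule obtain_T_raw_with_positive_filling[OF skew nonempty m V g])
    then show "g \<in> positive_filling lam ` T_raw lam m (even (card {k \<in> V. k < 0}))"
      by blast
  qed
qed

lemma card_T_D:
  assumes skew: "skew_diagram lam" and nonempty: "lam \<noteq> {}" and m: "m \<ge> 1"
  shows "card (T_D lam m ev) = 2 ^ (card lam - 1) * f_shape lam"
proof -
  have fin: "finite lam" using skew by (simp add: skew_diagram_def)
  have member: "T_raw_member lam m ev p" if "p \<in> T_raw lam m ev" for p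
    using fin nonempty m that by unfold_locales
  define \<V> where "\<V> = {V. sign_transversal (card lam) V \<and> even (card {k \<in> V. k < 0}) = ev}"
  have fin_\<V>: "finite \<V>"
    by (rule finite_subset[of _ "Pow (entries (card lam))"])
      (auto simp: \<V>_def sign_transversal_def finite_entries)
  have finite_V: "finite V" and card_V: "card V = card lam" if "V \<in> \<V>" for V
    using that finite_sign_transversal card_sign_transversal unfolding \<V>_def by blast+
  have "card (T_D lam m ev) = card (positive_filling lam ` T_raw lam m ev)"
    unfolding T_D_def
  proof (rule card_quotient_eq_card_image)
    show "(p, q) \<in> {(p, q). p \<in> T_raw lam m ev \<and> q \<in> T_raw lam m ev \<and> same_D_tableau (card lam) p q}
        \<longleftrightarrow> positive_filling lam p = positive_filling lam q"
      if "p \<in> T_raw lam m ev" "q \<in> T_raw lam m ev" for p q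
      using that same_D_tableau_iff_positive_filling_eq[OF member member] by simp
  qed blast
  also have "\<dots> = card (\<Union>V \<in> \<V>. standard_fillings lam V)"
    by (simp add: positive_filling_image_T_raw[OF skew nonempty m] \<V>_def)
  also have "\<dots> = (\<Sum>V \<in> \<V>. card (standard_fillings lam V))"
  proof (rule card_UN_disjoint[OF fin_\<V>])
    show "\<forall>V\<in>\<V>. finite (standard_fillings lam V)"
      using finite_standard_fillings fin finite_V by blast
    show "\<forall>V\<in>\<V>. \<forall>V'\<in>\<V>. V \<noteq> V' \<longrightarrow> standard_fillings lam V \<inter> standard_fillings lam V' = {}"
      using standard_fillings_bij unfolding bij_betw_def by blast
  qed
  also have "\<dots> = card \<V> * f_shape lam"
    by (simp add: card_standard_fillings finite_V card_V)
  also have "card \<V> = 2 ^ (card lam - 1)"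
    using card_sign_transversals_parity[of "card lam" ev] fin nonempty
    by (simp add: \<V>_def Suc_le_eq card_gt_0_iff)
  finally show ?thesis .
qed

theorem proposition4p2:
  fixes lam :: "box set" and m :: nat
  assumes "skew_diagram lam" and "lam \<noteq> {}" and "m \<ge> 1"
  shows "card (T_D lam m True) = 2 ^ (card lam - 1) * f_shape lam \<and>
         card (T_D lam m False) = 2 ^ (card lam - 1) * f_shape lam"
  using card_T_D[OF assms] by simp

end
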